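(* Let $\rho$ be an admissible function on an RD-space $\mathcal X$, and let $\{\tilde T_t\}_{t>0}$ (a continuous $(\epsilon_1,\epsilon_2,\epsilon_3)$-AOTI) and $\{T_t\}_{t>0}$ (bounded linear operators on $L^2(\mathcal X)$ with integrable kernels) satisfy, for some $C>0$, $\delta_2\in(0,\epsilon_2]$, $\delta_1,\delta_3>0$ and all $t>0$, $x,y$: (i) $|T_t(x,y)|\le C\frac{1}{V_t(x)+V(x,y)}\big[\frac{t}{t+d(x,y)}\big]^{\delta_2}\big[\frac{\rho(x)}{t+\rho(x)}\big]^{\delta_3}$; (ii) $|T_t(x,y)-\tilde T_t(x,y)|\le C\big[\frac{t}{t+\rho(x)}\big]^{\delta_1}\frac{1}{V_t(x)+V(x,y)}\big[\frac{t}{t+d(x,y)}\big]^{\delta_2}$. Set $E_t=T_t-\tilde T_t$ and $E^+_\rho(f)(x)=\sup_{0<t<\rho(x)}|E_t(f)(x)|$. Then there is $C'>0$ such that $\|E^+_\rho(f)\|_{L^1(\mathcal X)}\le C'\|f\|_{L^1(\mathcal X)}$ for all $f\in L^1(\mathcal X)$.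
   Context: An RD-space is a triple $(\mathcal X,d,\mu)$ where $(\mathcal X,d)$ is a metric space and $\mu$ a regular Borel measure such that every ball $B(x,r)=\{y:d(x,y)<r\}$ has finite positive measure, $\mu$ is doubling, and there exist constants $0<\kappa\le n$, $C_2\ge1$ with $C_2^{-1}\lambda^\kappa\mu(B(x,r))\le\mu(B(x,\lambda r))\le C_2\lambda^n\mu(B(x,r))$ for all $x$, $0<r<\operatorname{diam}(\mathcal X)/2$, $1\le\lambda<\operatorname{diam}(\mathcal X)/(2r)$; $\mu(\mathcal X)=\infty$. $V_r(x)=\mu(B(x,r))$, $V(x,y)=\mu(B(x,d(x,y)))$. A positive function $\rho$ on $\mathcal X$ is admissible if there exist constants $C_3,k_0>0$ such that for all $x,y$, $\rho(y)\le C_3[\rho(x)]^{1/(1+k_0)}[\rho(x)+d(x,y)]^{k_0/(1+k_0)}$. Continuous AOTI: for $\epsilon_1\in(0,1]$, $\epsilon_2,\epsilon_3>0$, a family $\{\tilde S_t\}_{t>0}$ of bounded linear integral operators on $L^2(\mathcal X)$ with kernels $\tilde S_t(x,y)$ is a continuous $(\epsilon_1,\epsilon_2,\epsilon_3)$-AOTI if there is $C_6>0$ such that for all $t>0$ and $x,x',y,y'$: (i) $|\tilde S_t(x,y)|\le C_6\frac{1}{V_t(x)+V(x,y)}\big[\frac{t}{t+d(x,y)}\big]^{\epsilon_2}$; (ii) $|\tilde S_t(x,y)-\tilde S_t(x',y)|\le C_6\big[\frac{d(x,x')}{t+d(x,y)}\big]^{\epsilon_1}\frac{1}{V_t(x)+V(x,y)}\big[\frac{t}{t+d(x,y)}\big]^{\epsilon_2}$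 for $d(x,x')\le[t+d(x,y)]/2$; (iii) the same with $x$ and $y$ interchanged; (iv) $|[\tilde S_t(x,y)-\tilde S_t(x,y')]-[\tilde S_t(x',y)-\tilde S_t(x',y')]|\le C_6\big[\frac{d(x,x')}{t+d(x,y)}\big]^{\epsilon_1}\big[\frac{d(y,y')}{t+d(x,y)}\big]^{\epsilon_1}\frac{1}{V_t(x)+V(x,y)}\big[\frac{t}{t+d(x,y)}\big]^{\epsilon_3}$ for $d(x,x')\le[t+d(x,y)]/3$, $d(y,y')\le[t+d(x,y)]/3$; (v) $\int\tilde S_t(x,z)\,d\mu(z)=1=\int\tilde S_t(z,y)\,d\mu(z)$. *)

theory Defs
  imports "HOL-Analysis.Analysis"
begin

definition Vr :: "'a::metric_space measure \<Rightarrow> 'a \<Rightarrow> real \<Rightarrow> real" where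
  "Vr M x r = measure M (ball x r)"

definition Vxy :: "'a::metric_space measure \<Rightarrow> 'a \<Rightarrow> 'a \<Rightarrow> real" where
  "Vxy M x y = measure M (ball x (dist x y))"

definition diamX :: "'a::metric_space itself \<Rightarrow> ereal" where
  "diamX _ = (SUP x\<in>(UNIV::'a set). SUP y\<in>(UNIV::'a set). ereal (dist x y))"

definition RD_space :: "'a::metric_space measure \<Rightarrow> bool" where
  "RD_space M \<longleftrightarrow>
     space M = UNIV \<and> sets M = sets borel \<and>
     (\<forall>x r. r > 0 \<longrightarrow> 0 < emeasure M (ball x r) \<and> emeasure M (ball x r) < \<infinity>) \<and>
     (\<forall>A\<in>sets M. emeasure M A = (INF U\<in>{U. open U \<and> A \<subseteq> U}. emeasure M U)) \<and>
     (\<exists>C1. \<forall>x r. r > 0 \<longrightarrow> emeasure M (ball x (2*r)) \<le> ennreal C1 * emeasure M (ball x r)) \<and>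
     (\<exists>\<kappa> n C2. 0 < \<kappa> \<and> \<kappa> \<le> n \<and> 1 \<le> C2 \<and>
        (\<forall>x r lam. 0 < r \<and> ereal (2*r) < diamX TYPE('a) \<and> 1 \<le> lam \<and>
             ereal (2*r*lam) < diamX TYPE('a) \<longrightarrow>
           (1/C2) * lam powr \<kappa> * Vr M x r \<le> Vr M x (lam*r) \<and>
           Vr M x (lam*r) \<le> C2 * lam powr n * Vr M x r)) \<and>
     emeasure M (space M) = \<infinity>"

definition admissible :: "('a::metric_space \<Rightarrow> real) \<Rightarrow> bool" where
  "admissible \<rho> \<longleftrightarrow> (\<forall>x. 0 < \<rho> x) \<and>
     (\<exists>C3 k0. 0 < C3 \<and> 0 < k0 \<and> (\<forall>x y.
        \<rho> y \<le> C3 * \<rho> x powr (1/(1+k0)) * (\<rho> x + dist x y) powr (k0/(1+k0))))"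

definition L2_kernel_operator :: "'a::metric_space measure \<Rightarrow> ('a \<Rightarrow> 'a \<Rightarrow> real) \<Rightarrow> bool" where
  "L2_kernel_operator M K \<longleftrightarrow>
     (\<lambda>(x,y). K x y) \<in> borel_measurable (M \<Otimes>\<^sub>M M) \<and>
     (\<exists>C. \<forall>f. f \<in> borel_measurable M \<and> integrable M (\<lambda>y. (f y)^2) \<longrightarrow>
        (AE x in M. integrable M (\<lambda>y. K x y * f y)) \<and>
        (\<integral>\<^sup>+x. ennreal ((\<integral>y. K x y * f y \<partial>M)^2) \<partial>M) \<le> ennreal C * (\<integral>\<^sup>+y. ennreal ((f y)^2) \<partial>M))"

definition dec :: "'a::metric_space measure \<Rightarrow> real \<Rightarrow> 'a \<Rightarrow> 'a \<Rightarrow> real \<Rightarrow> real" where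
  "dec M t x y a = 1 / (Vr M x t + Vxy M x y) * (t / (t + dist x y)) powr a"

definition cont_AOTI :: "'a::metric_space measure \<Rightarrow> real \<Rightarrow> real \<Rightarrow> real \<Rightarrow>
    (real \<Rightarrow> 'a \<Rightarrow> 'a \<Rightarrow> real) \<Rightarrow> bool" where
  "cont_AOTI M e1 e2 e3 S \<longleftrightarrow>
     0 < e1 \<and> e1 \<le> 1 \<and> 0 < e2 \<and> 0 < e3 \<and>
     (\<forall>t>0. L2_kernel_operator M (S t)) \<and>
     (\<exists>C6>0. \<forall>t>0. \<forall>x x' y y'.
        \<bar>S t x y\<bar> \<le> C6 * dec M t x y e2 \<and>
        (dist x x' \<le> (t + dist x y) / 2 \<longrightarrow>
           \<bar>S t x y - S t x' y\<bar> \<le> C6 * (dist x x' / (t + dist x y)) powr e1 * dec M t x y e2) \<and>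
        (dist y y' \<le> (t + dist x y) / 2 \<longrightarrow>
           \<bar>S t x y - S t x y'\<bar> \<le> C6 * (dist y y' / (t + dist x y)) powr e1 * dec M t x y e2) \<and>
        (dist x x' \<le> (t + dist x y) / 3 \<and> dist y y' \<le> (t + dist x y) / 3 \<longrightarrow>
           \<bar>(S t x y - S t x y') - (S t x' y - S t x' y')\<bar> \<le>
             C6 * (dist x x' / (t + dist x y)) powr e1 * (dist y y' / (t + dist x y)) powr e1
                * dec M t x y e3) \<and>
        (\<integral>z. S t x z \<partial>M) = 1 \<and> (\<integral>z. S t z y \<partial>M) = 1)"

end

theory Submission
  imports Defs
begin

text \<open>
  Only the error estimate (ii) is needed. For \<open>0 < t < \<rho>(x)\<close> the kernel of
  \<open>E\<^sub>t = T\<^sub>t - T\<^sup>~\<^sub>t\<close> is dominated, uniformly in \<open>t\<close>, by the single kernel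
  \<open>K(x,y) = min(d/g(y), g(y)/d)\<^sup>\<beta> / \<mu>(B(y,d))\<close> with \<open>d = d(x,y)\<close> and \<open>g \<approx> \<rho>\<close> a Lipschitz
  regularization of \<open>\<rho>\<close>: the factor \<open>(t/(t+\<rho>(x)))\<^sup>\<delta>\<^sub>1\<close> together with the lower dimension bound
  yields a bump at scale \<open>\<rho>(x)\<close>, which admissibility moves to scale \<open>\<rho>(y)\<close>, and doubling
  replaces \<open>V(x,y)\<close> by \<open>\<mu>(B(y,d))\<close>. A dyadic decomposition into annuli around \<open>y\<close> shows
  \<open>\<integral> K(x,y) d\<mu>(x) \<le> B\<close> uniformly in \<open>y\<close>, and Tonelli's theorem turns this column bound into
  the \<open>L\<^sup>1\<close> bound for the maximal operator.
\<close>

section \<open>Basic facts about RD-spaces\<close>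

lemma ball_subset_ball_dist:
  fixes a b :: "'a::metric_space"
  assumes "dist a b + r \<le> s" shows "ball a r \<subseteq> ball b s"
proof
  fix z assume "z \<in> ball a r"
  then show "z \<in> ball b s"
    using dist_triangle[of b z a] assms by (simp add: dist_commute)
qed

lemma RD_sets: "RD_space (M::'a::metric_space measure) \<Longrightarrow> sets M = sets borel"
  unfolding RD_space_def by blast

lemma RD_space_UNIV: "RD_space (M::'a::metric_space measure) \<Longrightarrow> space M = UNIV"
  unfolding RD_space_def by blast

lemma RD_ball_sets: "RD_space (M::'a::metric_space measure) \<Longrightarrow> ball x r \<in> sets M"
  using RD_sets by (metis borel_open open_ball)

lemma RD_ball_emeasure:
  "RD_space (M::'a::metric_space measure) \<Longrightarrow> 0 < r \<Longrightarrow>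
     0 < emeasure M (ball x r) \<and> emeasure M (ball x r) < \<infinity>"
  unfolding RD_space_def by blast

lemma RD_emeasure_UNIV: "RD_space (M::'a::metric_space measure) \<Longrightarrow> emeasure M UNIV = \<infinity>"
  unfolding RD_space_def by metis

lemma RD_ball_fmeasurable:
  assumes "RD_space (M::'a::metric_space measure)" shows "ball x r \<in> fmeasurable M"
proof (cases "0 < r")
  case True
  then show ?thesis
    using RD_ball_emeasure[OF assms True] RD_ball_sets[OF assms] unfolding fmeasurable_def by blast
qed (simp add: fmeasurable_def ball_empty)

lemma RD_emeasure_ball:
  "RD_space (M::'a::metric_space measure) \<Longrightarrow> emeasure M (ball x r) = ennreal (measure M (ball x r))"
  using emeasure_eq_measure2[OF RD_ball_fmeasurable] .

lemma RD_ball_measure_pos: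
  assumes "RD_space (M::'a::metric_space measure)" "0 < r" shows "0 < measure M (ball x r)"
  using RD_ball_emeasure[OF assms] RD_emeasure_ball[OF assms(1)] by simp

lemma RD_ball_measure_mono:
  assumes "RD_space (M::'a::metric_space measure)" "ball x r \<subseteq> ball y s"
  shows "measure M (ball x r) \<le> measure M (ball y s)"
  using measure_mono_fmeasurable[OF assms(2) RD_ball_sets[OF assms(1)] RD_ball_fmeasurable[OF assms(1)]] .

text \<open>Since \<open>\<mu>(\<X>) = \<infinity>\<close> while balls have finite measure, the space is unbounded, so the
  diameter restrictions in the definition of an RD-space are void.\<close>

lemma RD_diam_infinite:
  assumes "RD_space (M::'a::metric_space measure)" shows "ereal c < diamX TYPE('a)"
proof (rule ccontr)
  assume "\<not> ereal c < diamX TYPE('a)"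
  have le: "dist x y \<le> c" for x y :: 'a
  proof -
    have "ereal (dist x y) \<le> diamX TYPE('a)" unfolding diamX_def
      by (meson SUP_upper UNIV_I order_trans order_refl)
    then show ?thesis using \<open>\<not> ereal c < diamX TYPE('a)\<close> by (meson ereal_less_eq(3) le_less_trans not_le)
  qed
  obtain x0 :: 'a where True by simp
  have "y \<in> ball x0 (\<bar>c\<bar> + 1)" for y
    using le[of x0 y] abs_ge_self[of c] by simp
  then have "UNIV = ball x0 (\<bar>c\<bar> + 1)" by blast
  then have "emeasure M UNIV < \<infinity>"
    using RD_ball_emeasure[OF assms, of "\<bar>c\<bar> + 1" x0] by simp
  then show False
    using RD_emeasure_UNIV[OF assms] by simp
qed

lemma RD_dimension_bounds:
  fixes M :: "'a::metric_space measure"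
  assumes "RD_space M"
  obtains \<kappa> C2 N where "0 < \<kappa>" "1 \<le> C2"
    "\<And>x r lam. 0 < r \<Longrightarrow> 1 \<le> lam \<Longrightarrow> (1/C2) * lam powr \<kappa> * Vr M x r \<le> Vr M x (lam*r)"
    "\<And>x r lam. 0 < r \<Longrightarrow> 1 \<le> lam \<Longrightarrow> Vr M x (lam*r) \<le> C2 * lam powr N * Vr M x r"
proof -
  have "\<exists>\<kappa> n C2. 0 < \<kappa> \<and> \<kappa> \<le> n \<and> 1 \<le> C2 \<and>
      (\<forall>x r lam. 0 < r \<and> ereal (2*r) < diamX TYPE('a) \<and> 1 \<le> lam \<and> ereal (2*r*lam) < diamX TYPE('a) \<longrightarrow>
         (1/C2) * lam powr \<kappa> * Vr M x r \<le> Vr M x (lam*r) \<and> Vr M x (lam*r) \<le> C2 * lam powr n * Vr M x r)"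
    using assms unfolding RD_space_def by (elim conjE) assumption
  then obtain \<kappa> N C2 where "0 < \<kappa>" "\<kappa> \<le> N" "1 \<le> C2" and bounds:
    "\<forall>x r lam. 0 < r \<and> ereal (2*r) < diamX TYPE('a) \<and> 1 \<le> lam \<and> ereal (2*r*lam) < diamX TYPE('a) \<longrightarrow>
       (1/C2) * lam powr \<kappa> * Vr M x r \<le> Vr M x (lam*r) \<and> Vr M x (lam*r) \<le> C2 * lam powr N * Vr M x r"
    by blast
  have both: "(1/C2) * lam powr \<kappa> * Vr M x r \<le> Vr M x (lam*r) \<and> Vr M x (lam*r) \<le> C2 * lam powr N * Vr M x r"
    if "0 < r" "1 \<le> lam" for x r lam
    by (rule bounds[rule_format]) (use that RD_diam_infinite[OF assms] in auto)
  show thesis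
    by (rule that[of \<kappa> C2 N]) (use \<open>0 < \<kappa>\<close> \<open>1 \<le> C2\<close> both in simp_all)
qed

lemma RD_doubling:
  fixes M :: "'a::metric_space measure"
  assumes "RD_space M"
  obtains D where "0 < D" "\<And>x r. 0 < r \<Longrightarrow> measure M (ball x (2*r)) \<le> D * measure M (ball x r)"
proof -
  obtain \<kappa> C2 N where "0 < \<kappa>" "1 \<le> C2"
    and "\<And>x r lam. 0 < r \<Longrightarrow> 1 \<le> lam \<Longrightarrow> (1/C2) * lam powr \<kappa> * Vr M x r \<le> Vr M x (lam*r)"
    and up: "\<And>x r lam. 0 < r \<Longrightarrow> 1 \<le> lam \<Longrightarrow> Vr M x (lam*r) \<le> C2 * lam powr N * Vr M x r"
    using RD_dimension_bounds[OF assms] by blast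
  have "measure M (ball x (2*r)) \<le> C2 * 2 powr N * measure M (ball x r)" if "0 < r" for x r
    using up[where lam=2, OF that] unfolding Vr_def by simp
  then show thesis using that[of "C2 * 2 powr N"] \<open>1 \<le> C2\<close> by simp
qed

text \<open>The lower dimension bound forces \<open>\<mu>(B(x,s)) \<le> C s\<^sup>\<kappa>\<close> for small \<open>s\<close>, hence points
  are null sets; this lets us ignore the diagonal \<open>x = y\<close>, where the kernel bound degenerates.\<close>

lemma RD_points_null:
  fixes M :: "'a::metric_space measure"
  assumes rd: "RD_space M" shows "{x} \<in> null_sets M"
proof -
  obtain \<kappa> C2 N where \<kappa>: "0 < \<kappa>" and C2: "1 \<le> C2"
    and lo: "\<And>x r lam. 0 < r \<Longrightarrow> 1 \<le> lam \<Longrightarrow> (1/C2) * lam powr \<kappa> * Vr M x r \<le> Vr M x (lam*r)"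
    and "\<And>x r lam. 0 < r \<Longrightarrow> 1 \<le> lam \<Longrightarrow> Vr M x (lam*r) \<le> C2 * lam powr N * Vr M x r"
    using RD_dimension_bounds[OF rd] by blast
  have xs: "{x} \<in> sets M" using RD_sets[OF rd] by (metis borel_closed closed_singleton)
  define V1 where "V1 = measure M (ball x 1)"
  define m where "m = measure M {x}"
  have V1: "0 < V1" unfolding V1_def using RD_ball_measure_pos[OF rd] by simp
  have small: "m \<le> C2 * s powr \<kappa> * V1" if s: "0 < s" "s \<le> 1" for s
  proof -
    have "m \<le> measure M (ball x s)" unfolding m_def
      by (rule measure_mono_fmeasurable[OF _ xs RD_ball_fmeasurable[OF rd]]) (use s in auto)
    moreover have "(1/C2) * (1/s) powr \<kappa> * Vr M x s \<le> Vr M x ((1/s) * s)"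
      by (rule lo) (use s in auto)
    then have "measure M (ball x s) \<le> C2 * s powr \<kappa> * V1"
      using s C2 unfolding Vr_def V1_def by (simp add: powr_divide field_simps)
    ultimately show ?thesis by linarith
  qed
  have "m \<le> 0"
  proof (rule ccontr)
    assume "\<not> m \<le> 0"
    define c where "c = m / (2 * C2 * V1)"
    define s where "s = min 1 (c powr (1/\<kappa>))"
    have c0: "0 < c" unfolding c_def using \<open>\<not> m \<le> 0\<close> V1 C2 by simp
    have "s powr \<kappa> \<le> (c powr (1/\<kappa>)) powr \<kappa>" unfolding s_def using \<kappa> c0 by (intro powr_mono2) auto
    also have "\<dots> = c" using \<kappa> c0 by (simp add: powr_powr)
    finally have "C2 * s powr \<kappa> * V1 \<le> C2 * c * V1" using C2 V1 by (intro mult_right_mono mult_left_mono) auto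
    also have "\<dots> = m/2" unfolding c_def using C2 V1 by simp
    finally show False using small[of s] \<open>\<not> m \<le> 0\<close> c0 unfolding s_def by simp
  qed
  then have "measure M {x} = 0" unfolding m_def using measure_nonneg[of M "{x}"] by linarith
  moreover have "emeasure M {x} < \<infinity>"
    using emeasure_mono[of "{x}" "ball x 1" M] RD_ball_emeasure[OF rd, of 1 x] RD_ball_sets[OF rd]
    by (simp add: order_le_less_trans)
  ultimately show ?thesis using xs by (simp add: null_sets_def emeasure_eq_ennreal_measure)
qed

lemma RD_sigma_finite:
  fixes M :: "'a::metric_space measure"
  assumes rd: "RD_space M" shows "sigma_finite_measure M"
proof
  obtain x0 :: 'a where True by simp
  define B where "B = (\<lambda>n::nat. ball x0 (real n))"
  have "z \<in> (\<Union>n. B n)" for z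
  proof -
    obtain n :: nat where "dist x0 z < real n" using reals_Archimedean2 by blast
    then show ?thesis unfolding B_def by auto
  qed
  then have cover: "\<Union>(range B) = space M" using RD_space_UNIV[OF rd] by blast
  have "emeasure M (B n) \<noteq> \<infinity>" for n
    using RD_ball_fmeasurable[OF rd, of x0 "real n"] unfolding B_def fmeasurable_def by auto
  moreover have "range B \<subseteq> sets M" using RD_ball_sets[OF rd] unfolding B_def by blast
  ultimately show "\<exists>A. countable A \<and> A \<subseteq> sets M \<and> \<Union> A = space M \<and> (\<forall>a\<in>A. emeasure M a \<noteq> \<infinity>)"
    using cover by (intro exI[of _ "range B"]) blast
qed

section \<open>Separability and measurability on the product space\<close>

text \<open>Tonelli's theorem will be applied on \<open>M \<Otimes>\<^sub>M M\<close>, whose \<open>\<sigma>\<close>-algebra is generated by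
  rectangles. For kernels built from \<open>d(x,y)\<close> to be measurable there, we need that open subsets
  of \<open>\<X> \<times> \<X>\<close> are countable unions of rectangles, i.e. that \<open>\<X>\<close> is separable. Separability
  follows from the upper dimension bound by a packing argument.\<close>

definition separated :: "real \<Rightarrow> 'a::metric_space set \<Rightarrow> bool" where
  "separated e S \<longleftrightarrow> (\<forall>a\<in>S. \<forall>b\<in>S. a \<noteq> b \<longrightarrow> e \<le> dist a b)"

lemma separated_balls_disjoint:
  "separated e S \<Longrightarrow> pairwise (\<lambda>i j. disjnt (ball i (e/2)) (ball j (e/2))) S"
proof (rule pairwiseI)
  fix a b assume "separated e S" "a \<in> S" "b \<in> S" "a \<noteq> b"
  then have "e \<le> dist a b" unfolding separated_def by auto
  then have "z \<notin> ball a (e/2) \<or> z \<notin> ball b (e/2)" for z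
    using dist_triangle2[of a b z] by auto
  then show "disjnt (ball a (e/2)) (ball b (e/2))" unfolding disjnt_def by blast
qed

text \<open>The balls of radius \<open>e/2\<close> around an \<open>e\<close>-separated subset of \<open>B(x\<^sub>0,R)\<close> are disjoint
  and each carries a fixed proportion of \<open>\<mu>(B(x\<^sub>0,R+e))\<close>, so there are boundedly many points.\<close>

lemma RD_packing_bound:
  fixes M :: "'a::metric_space measure" and x0 :: 'a
  assumes rd: "RD_space M" and "0 < R" "0 < e"
  obtains b :: nat where "\<And>S. finite S \<Longrightarrow> S \<subseteq> ball x0 R \<Longrightarrow> separated e S \<Longrightarrow> card S < b"
proof -
  obtain \<kappa> C2 N where "0 < \<kappa>" and C2: "1 \<le> C2"
    and "\<And>x r lam. 0 < r \<Longrightarrow> 1 \<le> lam \<Longrightarrow> (1/C2) * lam powr \<kappa> * Vr M x r \<le> Vr M x (lam*r)"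
    and up: "\<And>x r lam. 0 < r \<Longrightarrow> 1 \<le> lam \<Longrightarrow> Vr M x (lam*r) \<le> C2 * lam powr N * Vr M x r"
    using RD_dimension_bounds[OF rd] by blast
  define lam where "lam = (2*R + e) / (e/2)"
  define V where "V = measure M (ball x0 (R + e))"
  have lam1: "1 \<le> lam" unfolding lam_def using assms by (simp add: field_simps)
  define c where "c = C2 * lam powr N"
  have c0: "0 < c" unfolding c_def using C2 lam1 by simp
  have V0: "0 < V" unfolding V_def using RD_ball_measure_pos[OF rd] assms by simp
  have bound: "real (card S) \<le> c"
    if S: "finite S" "S \<subseteq> ball x0 R" "separated e S" for S
  proof -
    have each: "V / c \<le> measure M (ball s (e/2))" if s: "s \<in> S" for s
    proof -
      have "dist x0 s < R" using S(2) s by auto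
      then have "ball x0 (R + e) \<subseteq> ball s (lam * (e/2))"
        unfolding lam_def using assms by (intro ball_subset_ball_dist) simp
      then have "V \<le> Vr M s (lam * (e/2))" unfolding V_def Vr_def by (rule RD_ball_measure_mono[OF rd])
      also have "\<dots> \<le> C2 * lam powr N * Vr M s (e/2)" by (rule up) (use assms lam1 in auto)
      finally show ?thesis using c0 unfolding Vr_def c_def by (simp add: divide_le_eq mult.commute)
    qed
    have disjoint: "pairwise (\<lambda>i j. disjnt (ball i (e/2)) (ball j (e/2))) S"
      using S(3) by (rule separated_balls_disjoint)
    have union_sub: "(\<Union>s\<in>S. ball s (e/2)) \<subseteq> ball x0 (R + e)"
      using S(2) assms by (intro UN_least ball_subset_ball_dist) (auto simp: dist_commute)
    have "real (card S) * (V / c) = (\<Sum>s\<in>S. V / c)" by simp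
    also have "\<dots> \<le> (\<Sum>s\<in>S. measure M (ball s (e/2)))" by (rule sum_mono) (rule each)
    also have "\<dots> = measure M (\<Union>s\<in>S. ball s (e/2))"
      by (rule measure_UNION'[symmetric]) (use S(1) disjoint RD_ball_fmeasurable[OF rd] in auto)
    also have "\<dots> \<le> V" unfolding V_def
      by (rule measure_mono_fmeasurable[OF union_sub _ RD_ball_fmeasurable[OF rd]])
        (use S(1) RD_ball_sets[OF rd] in auto)
    finally have scaled: "real (card S) * (V / c) \<le> V" .
    have "x \<le> c" if "x * (V / c) \<le> V" for x using that V0 c0 by (simp add: field_simps)
    from this[OF scaled] show ?thesis .
  qed
  show thesis
  proof (rule that)
    fix S assume "finite S" "S \<subseteq> ball x0 R" "separated e S"
    then have "real (card S) \<le> real (nat \<lceil>c\<rceil>)"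
      using bound real_nat_ceiling_ge[of c] by (meson order_trans)
    then show "card S < nat \<lceil>c\<rceil> + 1" by simp
  qed
qed

text \<open>A maximal \<open>e\<close>-separated subset of \<open>B(x\<^sub>0,R)\<close> (which exists by the packing bound) is a finite
  \<open>e\<close>-net of the ball.\<close>

lemma RD_finite_net:
  fixes M :: "'a::metric_space measure" and x0 :: 'a
  assumes rd: "RD_space M" and "0 < R" "0 < e"
  obtains S where "finite S" "\<forall>z\<in>ball x0 R. \<exists>s\<in>S. dist z s < e"
proof -
  define P where "P S \<longleftrightarrow> finite S \<and> S \<subseteq> ball x0 R \<and> separated e S" for S
  obtain b where "\<And>S. finite S \<Longrightarrow> S \<subseteq> ball x0 R \<Longrightarrow> separated e S \<Longrightarrow> card S < b"
    using RD_packing_bound[OF rd assms(2,3)] by blast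
  then have "\<forall>S. P S \<longrightarrow> card S < b" unfolding P_def by blast
  moreover have "P {}" unfolding P_def separated_def by simp
  ultimately have "\<exists>S. P S \<and> (\<forall>S'. P S' \<longrightarrow> card S' \<le> card S)"
    by (rule ex_has_greatest_nat[rotated])
  then obtain S where S: "P S" and maximal: "\<And>S'. P S' \<Longrightarrow> card S' \<le> card S" by blast
  have covering: "\<exists>s\<in>S. dist z s < e" if z: "z \<in> ball x0 R" for z
  proof (rule ccontr)
    assume "\<not> ?thesis"
    then have far: "\<forall>s\<in>S. e \<le> dist z s" by (auto simp: not_less)
    then have "z \<notin> S" using assms by force
    moreover have "P (insert z S)" using S far z unfolding P_def separated_def by (auto simp: dist_commute)
    ultimately show False using maximal[of "insert z S"] S unfolding P_def by simp
  qed
  show thesis by (rule that[of S]) (use S covering in \<open>simp_all add: P_def\<close>)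
qed

lemma RD_separable:
  fixes M :: "'a::metric_space measure"
  assumes rd: "RD_space M"
  shows "\<exists>D :: 'a set. countable D \<and> (\<forall>z. \<forall>e>0. \<exists>q\<in>D. dist z q < e)"
proof -
  obtain x0 :: 'a where True by simp
  define net where "net n m S \<longleftrightarrow> finite S \<and> (\<forall>z\<in>ball x0 (real n + 1). \<exists>s\<in>S. dist z s < inverse (real (Suc m)))"
    for n m :: nat and S
  define F where "F n m = (SOME S. net n m S)" for n m
  have "\<exists>S. net n m S" for n m
    unfolding net_def by (rule RD_finite_net[OF rd, of "real n + 1" "inverse (real (Suc m))" x0]) auto
  then have "net n m (F n m)" for n m unfolding F_def by (rule someI_ex)
  then have F: "finite (F n m)" "\<forall>z\<in>ball x0 (real n + 1). \<exists>s\<in>F n m. dist z s < inverse (real (Suc m))"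
    for n m unfolding net_def by blast+
  have "\<exists>q\<in>(\<Union>n m. F n m). dist z q < e" if e: "0 < e" for z e
  proof -
    obtain m where m: "inverse (real (Suc m)) < e" using reals_Archimedean[OF e] by blast
    obtain n where "dist x0 z < real n" using reals_Archimedean2 by blast
    then have "z \<in> ball x0 (real n + 1)" by simp
    then obtain s where "s \<in> F n m" "dist z s < inverse (real (Suc m))" using F(2)[of n m] by blast
    then show ?thesis using m by (intro bexI[of _ s]) auto
  qed
  moreover have "countable (\<Union>n m. F n m)" using F(1) by (simp add: countable_finite)
  ultimately show ?thesis by blast
qed

text \<open>Every open subset of \<open>\<X> \<times> \<X>\<close> is a countable union of products of balls with centres in
  a countable dense set and rational radii.\<close>

lemma open_pair_contains_balls:
  fixes U :: "('a::metric_space \<times> 'b::metric_space) set"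
  assumes U: "open U" and xy: "(x,y) \<in> U"
  obtains e where "0 < e" "ball x e \<times> ball y e \<subseteq> U"
proof -
  obtain A B where AB: "open A" "open B" "(x,y) \<in> A \<times> B" "A \<times> B \<subseteq> U"
    using open_prod_elim[OF U xy] by metis
  obtain e1 where e1: "0 < e1" "ball x e1 \<subseteq> A" using AB openE by (metis mem_Sigma_iff)
  obtain e2 where e2: "0 < e2" "ball y e2 \<subseteq> B" using AB openE by (metis mem_Sigma_iff)
  have "ball x (min e1 e2) \<times> ball y (min e1 e2) \<subseteq> A \<times> B"
    using e1(2) e2(2) by (auto simp: subset_iff)
  then show thesis using that[of "min e1 e2"] e1(1) e2(1) AB(4) by simp
qed

lemma RD_open_pair_sets:
  fixes M :: "'a::metric_space measure"
  assumes rd: "RD_space M" and U: "open (U :: ('a \<times> 'a) set)"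
  shows "U \<in> sets (M \<Otimes>\<^sub>M M)"
proof -
  obtain D :: "'a set" where D: "countable D" "\<And>z e. 0 < e \<Longrightarrow> \<exists>q\<in>D. dist z q < e"
    using RD_separable[OF rd] by blast
  define I where "I = {(q,p,s). q \<in> D \<and> p \<in> D \<and> s \<in> \<rat> \<and> 0 < s \<and> ball q s \<times> ball p s \<subseteq> U}"
  define R where "R = (\<lambda>(q::'a, p::'a, s::real). ball q s \<times> ball p s)"
  have "U \<subseteq> \<Union>(R ` I)"
  proof
    fix w assume "w \<in> U"
    then obtain x y where w: "w = (x,y)" by (cases w)
    obtain e where e: "0 < e" "ball x e \<times> ball y e \<subseteq> U"
      using open_pair_contains_balls[OF U \<open>w \<in> U\<close>[unfolded w]] by blast
    obtain s where s: "s \<in> \<rat>" "0 < s" "s < e/2" using Rats_dense_in_real[of 0 "e/2"] e by auto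
    obtain q p where qp: "q \<in> D" "dist x q < s" "p \<in> D" "dist y p < s"
      using D(2)[OF s(2), of x] D(2)[OF s(2), of y] by blast
    have "ball q s \<subseteq> ball x e" "ball p s \<subseteq> ball y e"
      using qp s by (auto intro!: ball_subset_ball_dist simp: dist_commute)
    with e(2) have "(q,p,s) \<in> I" unfolding I_def using qp s by blast
    moreover have "w \<in> R (q,p,s)" unfolding R_def w using qp by (simp add: dist_commute)
    ultimately show "w \<in> \<Union>(R ` I)" by blast
  qed
  then have "U = \<Union>(R ` I)" by (auto simp: R_def I_def)
  moreover have "countable I"
    by (rule countable_subset[of _ "D \<times> (D \<times> \<rat>)"]) (use D(1) countable_rat in \<open>auto simp: I_def\<close>)
  moreover have "R ` I \<subseteq> sets (M \<Otimes>\<^sub>M M)"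
    by (auto simp: R_def intro!: pair_measureI RD_ball_sets[OF rd])
  ultimately show ?thesis by (simp add: sets.countable_UN')
qed

lemma RD_lsc_pair_measurable:
  fixes M :: "'a::metric_space measure"
  assumes rd: "RD_space M" and lsc: "\<And>a. open {p. a < f p}"
  shows "(f :: 'a \<times> 'a \<Rightarrow> real) \<in> borel_measurable (M \<Otimes>\<^sub>M M)"
  unfolding borel_measurable_iff_greater space_pair_measure RD_space_UNIV[OF rd]
  using RD_open_pair_sets[OF rd lsc] by simp

lemma RD_dist_pair_measurable:
  assumes "RD_space (M::'a::metric_space measure)"
  shows "(\<lambda>p. dist (fst p) (snd p)) \<in> borel_measurable (M \<Otimes>\<^sub>M M)"
  by (rule RD_lsc_pair_measurable[OF assms]) (intro open_Collect_less continuous_intros)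

text \<open>Inner regularity of \<open>\<mu>\<close> on balls: \<open>B(y,d)\<close> is the increasing union of the balls \<open>B(y,d-e)\<close>.\<close>

lemma RD_ball_measure_inner:
  fixes M :: "'a::metric_space measure"
  assumes rd: "RD_space M" and a: "a < measure M (ball y d)"
  obtains e where "0 < e" "a < measure M (ball y (d - e))"
proof (cases "d \<le> 0")
  case True
  then show thesis using a that[of 1] by (simp add: ball_empty)
next
  case False
  define A where "A = (\<lambda>n::nat. ball y (d - d/(real n + 2)))"
  have "incseq A" unfolding A_def
    by (intro incseq_SucI subset_ball) (use False in \<open>auto intro!: divide_left_mono\<close>)
  moreover have union: "(\<Union>n. A n) = ball y d"
  proof
    show "ball y d \<subseteq> (\<Union>n. A n)"
    proof
      fix z assume "z \<in> ball y d"
      then have g: "0 < d - dist y z" by simp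
      obtain n :: nat where "d / (d - dist y z) < real n" using reals_Archimedean2 by blast
      then have "d/(real n + 2) < d - dist y z" using g False by (simp add: field_simps)
      then show "z \<in> (\<Union>n. A n)" unfolding A_def by (auto intro!: exI[of _ n])
    qed
    show "(\<Union>n. A n) \<subseteq> ball y d"
      unfolding A_def using False by (intro UN_least subset_ball) simp
  qed
  moreover have "range A \<subseteq> sets M" unfolding A_def using RD_ball_sets[OF rd] by blast
  ultimately have "(\<lambda>n. measure M (A n)) \<longlonglongrightarrow> measure M (\<Union>n. A n)"
    using fmeasurableD2[OF RD_ball_fmeasurable[OF rd, of y d]] by (intro Lim_measure_incseq) auto
  then have "(\<lambda>n. measure M (A n)) \<longlonglongrightarrow> measure M (ball y d)" by (simp only: union)
  then have "eventually (\<lambda>n. a < measure M (A n)) sequentially" using a by (rule order_tendstoD(1))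
  then obtain n where "\<forall>m\<ge>n. a < measure M (A m)" unfolding eventually_sequentially by blast
  then show thesis using that[of "d/(real n + 2)"] False unfolding A_def by simp
qed

text \<open>The map \<open>(x,y) \<mapsto> \<mu>(B(y,d(x,y)))\<close> is lower semicontinuous, hence product measurable.\<close>

lemma RD_ball_measure_lsc:
  fixes M :: "'a::metric_space measure"
  assumes rd: "RD_space M"
  shows "open {p::'a \<times> 'a. a < measure M (ball (snd p) (dist (fst p) (snd p)))}"
proof (rule openI)
  fix p :: "'a \<times> 'a" assume "p \<in> {p. a < measure M (ball (snd p) (dist (fst p) (snd p)))}"
  then obtain x y where p: "p = (x,y)" and "a < measure M (ball y (dist x y))" by (cases p) auto
  then obtain e where e: "0 < e" "a < measure M (ball y (dist x y - e))"
    using RD_ball_measure_inner[OF rd] by blast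
  have "a < measure M (ball y' (dist x' y'))" if near: "dist p (x',y') < e/4" for x' y'
  proof -
    have "dist x x' < e/4" "dist y y' < e/4"
      using near dist_fst_le[of p "(x',y')"] dist_snd_le[of p "(x',y')"] unfolding p by auto
    moreover have "dist x y \<le> dist x x' + dist x' y' + dist y y'"
      by (metis add.commute dist_commute dist_triangle add_le_cancel_left order_trans)
    ultimately have "dist y y' + (dist x y - e) \<le> dist x' y'" using e(1) by linarith
    then have "ball y (dist x y - e) \<subseteq> ball y' (dist x' y')" by (rule ball_subset_ball_dist)
    then show ?thesis using e(2) RD_ball_measure_mono[OF rd] order_less_le_trans by blast
  qed
  then show "\<exists>e>0. ball p e \<subseteq> {p. a < measure M (ball (snd p) (dist (fst p) (snd p)))}"
    using e(1) by (intro exI[of _ "e/4"]) (auto simp: dist_commute)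
qed

section \<open>Elementary inequalities for the kernel estimate\<close>

text \<open>Throughout, \<open>\<theta> = min \<delta>\<^sub>1 (min \<delta>\<^sub>2 \<kappa>)\<close>. The quotients below are all \<open>\<le> 1\<close>, so lowering
  an exponent to \<open>\<theta>\<close> only enlarges them.\<close>

lemma quotient_le_ratio:
  fixes t s u :: real
  assumes "0 < t" "0 < s" "t \<le> u" shows "t / (t + s) \<le> u / s"
proof -
  have "t / (t + s) \<le> t / s" using assms by (simp add: frac_le)
  also have "\<dots> \<le> u / s" using assms by (simp add: divide_right_mono)
  finally show ?thesis .
qed

lemma inverse_volume_bound:
  fixes t d V W C2 \<kappa> \<theta> :: real
  assumes "0 < d" "d < t" "0 < V" "0 < W" "1 \<le> C2" "0 < \<theta>" "\<theta> \<le> \<kappa>"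
    and "(1/C2) * (t/d) powr \<kappa> * V \<le> W"
  shows "1/W \<le> C2 * (d/t) powr \<theta> / V"
proof -
  have "1/W \<le> C2 * (d/t) powr \<kappa> / V"
    using assms by (simp add: powr_divide field_simps)
  also have "\<dots> \<le> C2 * (d/t) powr \<theta> / V"
    using assms by (intro divide_right_mono mult_left_mono powr_mono') auto
  finally show ?thesis .
qed

text \<open>For \<open>0 < t < \<rho>\<close> the factor \<open>(t/(t+\<rho>))\<^sup>\<delta>\<^sub>1\<close> of the error kernel together with the
  decay factor \<open>1/(W+V) (t/(t+d))\<^sup>\<delta>\<^sub>2\<close> (where \<open>W = V\<^sub>t(x)\<close>, \<open>V = V(x,y)\<close>, \<open>d = d(x,y)\<close>)
  is controlled by \<open>min(d/\<rho>, \<rho>/d)\<^sup>\<theta>/V\<close>: a bump at scale \<open>\<rho>\<close>, uniformly in \<open>t\<close>. The only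
  geometric input is the lower dimension bound comparing \<open>W\<close> and \<open>V\<close> when \<open>d < t\<close>.\<close>

lemma error_factor_bound:
  fixes t \<rho> d V W C2 \<kappa> \<delta>1 \<delta>2 :: real
  assumes t: "0 < t" "t < \<rho>" and d: "0 < d" and V: "0 < V" and W: "0 < W" and C2: "1 \<le> C2"
    and pos: "0 < \<kappa>" "0 < \<delta>1" "0 < \<delta>2"
    and volume: "d < t \<Longrightarrow> (1/C2) * (t/d) powr \<kappa> * V \<le> W"
  shows "(t/(t+\<rho>)) powr \<delta>1 * (1/(W+V) * (t/(t+d)) powr \<delta>2)
     \<le> C2 * min (d/\<rho>) (\<rho>/d) powr (min \<delta>1 (min \<delta>2 \<kappa>)) / V"
proof -
  define \<theta> where "\<theta> = min \<delta>1 (min \<delta>2 \<kappa>)"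
  have \<theta>: "0 < \<theta>" "\<theta> \<le> \<delta>1" "\<theta> \<le> \<delta>2" "\<theta> \<le> \<kappa>" using pos by (auto simp: \<theta>_def)
  define A where "A = (t/(t+\<rho>)) powr \<delta>1"
  define B where "B = (t/(t+d)) powr \<delta>2"
  have A: "0 \<le> A" "A \<le> 1" unfolding A_def using t pos by (auto intro: powr_le1)
  have B: "0 \<le> B" "B \<le> 1" unfolding B_def using t d pos by (auto intro: powr_le1)
  have via_V: "A * (1/(W+V) * B) \<le> A * B / V"
    using A B V W by (simp add: frac_le mult_left_mono mult_right_mono divide_simps)
  have "A * (1/(W+V) * B) \<le> C2 * (min (d/\<rho>) (\<rho>/d)) powr \<theta> / V"
  proof (cases "\<rho> \<le> d")
    case True
    then have "\<rho>/d \<le> 1" "1 \<le> d/\<rho>" using t d by auto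
    then have m: "min (d/\<rho>) (\<rho>/d) = \<rho>/d" by (intro min_absorb2) linarith
    have "B \<le> (\<rho>/d) powr \<delta>2"
      unfolding B_def using t d pos by (intro powr_mono2 quotient_le_ratio) auto
    also have "\<dots> \<le> (\<rho>/d) powr \<theta>" using \<theta> True t d by (intro powr_mono') auto
    finally have "A * B \<le> 1 * (\<rho>/d) powr \<theta>" using A B by (intro mult_mono) auto
    then have "A * B / V \<le> C2 * (\<rho>/d) powr \<theta> / V"
      using C2 V by (simp add: divide_right_mono order_trans[OF _ mult_right_mono[of 1 C2]])
    then show ?thesis using via_V unfolding m by linarith
  next
    case far: False
    then have "d/\<rho> \<le> 1" "1 \<le> \<rho>/d" using t d by auto
    then have m: "min (d/\<rho>) (\<rho>/d) = d/\<rho>" by (intro min_absorb1) linarith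
    show ?thesis
    proof (cases "t \<le> d")
      case True
      have "A \<le> (d/\<rho>) powr \<delta>1"
        unfolding A_def using t pos True by (intro powr_mono2 quotient_le_ratio) auto
      also have "\<dots> \<le> (d/\<rho>) powr \<theta>" using \<theta> far t d by (intro powr_mono') auto
      finally have "A * B \<le> (d/\<rho>) powr \<theta> * 1" using A B by (intro mult_mono) auto
      then have "A * B / V \<le> C2 * (d/\<rho>) powr \<theta> / V"
        using C2 V by (simp add: divide_right_mono order_trans[OF _ mult_right_mono[of 1 C2]])
      then show ?thesis using via_V unfolding m by linarith
    next
      case False
      then have inv_W: "1/W \<le> C2 * (d/t) powr \<theta> / V"
        using inverse_volume_bound[OF d _ V W C2 \<theta>(1,4) volume] by simp
      have "A \<le> (t/\<rho>) powr \<delta>1" unfolding A_def using t pos by (intro powr_mono2 quotient_le_ratio) auto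
      also have "\<dots> \<le> (t/\<rho>) powr \<theta>" using \<theta> t by (intro powr_mono') auto
      finally have A_le: "A \<le> (t/\<rho>) powr \<theta>" .
      have "A * (1/(W+V) * B) \<le> A * (1/W)"
        using A B V W by (intro mult_left_mono) (auto simp: frac_le intro: mult_le_one)
      also have "\<dots> \<le> (t/\<rho>) powr \<theta> * (C2 * (d/t) powr \<theta> / V)"
        using A_le inv_W A W by (intro mult_mono) auto
      also have "\<dots> = C2 * ((t/\<rho>) powr \<theta> * (d/t) powr \<theta>) / V" by simp
      also have "(t/\<rho>) powr \<theta> * (d/t) powr \<theta> = (d/\<rho>) powr \<theta>"
        using powr_mult[of "t/\<rho>" "d/t" \<theta>] t d by simp
      finally show ?thesis unfolding m .
    qed
  qed
  then show ?thesis unfolding A_def B_def \<theta>_def .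
qed

text \<open>The next three facts transfer the bump \<open>min(d/\<rho>(x), \<rho>(x)/d)\<close> from the point \<open>x\<close> to the
  point \<open>y\<close>, at the cost of the exponent \<open>a\<close> coming from admissibility.\<close>

lemma powr_double_le:
  fixes m b :: real assumes "0 < m" "0 \<le> b" "b \<le> 1" shows "(2*m) powr b \<le> 2 * m powr b"
proof -
  have "(2::real) powr b \<le> 2" using powr_mono[of b 1 2] assms by simp
  then show ?thesis using assms by (simp add: powr_mult mult_right_mono)
qed

lemma powr_interpolation_le:
  fixes s w m a :: real
  assumes "0 \<le> s" "s \<le> m" "0 \<le> w" "w \<le> m" "0 < m" "0 \<le> a" "a \<le> 1"
  shows "s powr a * (s + w) powr (1 - a) \<le> 2 * m"
proof -
  have "(s + w) powr (1 - a) \<le> (2*m) powr (1 - a)" using assms by (intro powr_mono2) auto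
  also have "\<dots> \<le> 2 * m powr (1 - a)" using assms by (intro powr_double_le) auto
  finally have "s powr a * (s + w) powr (1 - a) \<le> m powr a * (2 * m powr (1 - a))"
    using assms by (intro mult_mono powr_mono2) auto
  also have "\<dots> = 2 * m" using assms by (simp add: powr_add[symmetric])
  finally show ?thesis .
qed

lemma admissible_ratio_transfer:
  fixes px py d C3 a :: real
  assumes pos: "0 < px" "0 < py" "0 < d" and C3: "1 \<le> C3" and a: "0 < a" "a < 1"
    and xy: "py \<le> C3 * px powr a * (px + d) powr (1 - a)"
    and yx: "px \<le> C3 * py powr a * (py + d) powr (1 - a)"
  shows "min (d/px) (px/d) \<le> 2 * C3 * min (d/py) (py/d) powr a"
proof (cases "py \<le> d")
  case True
  then have "py/d \<le> 1" "1 \<le> d/py" using pos by auto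
  then have m: "min (d/py) (py/d) = py/d" by (intro min_absorb2) linarith
  have "(py + d) powr (1 - a) \<le> (2*d) powr (1 - a)" using True pos a by (intro powr_mono2) auto
  also have "\<dots> \<le> 2 * d powr (1 - a)" using pos a by (intro powr_double_le) auto
  finally have "C3 * py powr a * (py + d) powr (1 - a) \<le> C3 * py powr a * (2 * d powr (1 - a))"
    using C3 by (intro mult_left_mono) auto
  with yx have "px \<le> 2 * C3 * ((py/d) powr a * d)"
    using pos by (simp add: powr_diff powr_divide mult_ac)
  then have "px/d \<le> 2 * C3 * (py/d) powr a" using pos by (simp add: field_simps)
  then show ?thesis unfolding m by (meson min.coboundedI2 order_trans)
next
  case False
  then have "d/py \<le> 1" "1 \<le> py/d" using pos by auto
  then have m: "min (d/py) (py/d) = d/py" by (intro min_absorb1) linarith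
  have d_py: "d/py \<le> (d/py) powr a" using \<open>d/py \<le> 1\<close> pos a powr_mono'[of a 1 "d/py"] by simp
  have "px powr a * (px + d) powr (1 - a) \<le> 2 * max px d"
    using pos a by (intro powr_interpolation_le) auto
  then have "C3 * (px powr a * (px + d) powr (1 - a)) \<le> C3 * (2 * max px d)"
    using C3 by (intro mult_left_mono) auto
  with xy have "py \<le> 2 * C3 * max px d" by (simp add: mult_ac)
  then have "min (d/px) (px/d) \<le> 2 * C3 * (d/py)"
  proof (cases "d \<le> px")
    case True
    with \<open>py \<le> 2 * C3 * max px d\<close> have "d/px \<le> 2 * C3 * (d/py)"
      using pos by (simp add: max_def field_simps)
    then show ?thesis by (meson min.coboundedI1 order_trans)
  next
    case False
    with \<open>py \<le> 2 * C3 * max px d\<close> have "1 \<le> 2 * C3 * (d/py)"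
      using pos by (simp add: max_def field_simps)
    moreover have "px/d \<le> 1" using False pos by simp
    ultimately show ?thesis by (meson min.coboundedI2 order_trans)
  qed
  also have "\<dots> \<le> 2 * C3 * (d/py) powr a" using d_py C3 by (intro mult_left_mono) auto
  finally show ?thesis unfolding m .
qed

lemma min_ratio_comparable:
  fixes py g d C3 :: real
  assumes "0 < g" "g \<le> py" "py \<le> C3 * g" "0 < d" "1 \<le> C3"
  shows "min (d/py) (py/d) \<le> C3 * min (d/g) (g/d)"
proof -
  have "d/py \<le> d/g" using assms by (intro divide_left_mono) auto
  also have "\<dots> \<le> C3 * (d/g)" using assms mult_right_mono[of 1 C3 "d/g"] by simp
  finally have "d/py \<le> C3 * (d/g)" .
  moreover have "py/d \<le> C3 * (g/d)" using assms by (simp add: divide_right_mono)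
  moreover have "C3 * min (d/g) (g/d) = min (C3 * (d/g)) (C3 * (g/d))"
    using assms by (simp add: min_mult_distrib_left)
  ultimately show ?thesis by linarith
qed

section \<open>Admissible functions\<close>

text \<open>An admissible \<open>\<rho>\<close> satisfies \<open>\<rho>(y) \<le> C\<^sub>3 \<rho>(x)\<^sup>a (\<rho>(x) + d(x,y))\<^sup>1\<^sup>-\<^sup>a\<close> with \<open>a = 1/(1+k\<^sub>0)\<close>;
  we record the constants in this normalized form. Taking \<open>x = y\<close> shows \<open>C\<^sub>3 \<ge> 1\<close>.\<close>

lemma admissible_constants:
  fixes \<rho> :: "'a::metric_space \<Rightarrow> real"
  assumes "admissible \<rho>"
  obtains C3 a where "1 \<le> C3" "0 < a" "a < 1" "\<And>x. 0 < \<rho> x"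
    "\<And>x y. \<rho> y \<le> C3 * \<rho> x powr a * (\<rho> x + dist x y) powr (1 - a)"
proof -
  obtain C3 k0 where pos: "\<And>x. 0 < \<rho> x" and "0 < C3" "0 < k0" and
    adm: "\<And>x y. \<rho> y \<le> C3 * \<rho> x powr (1/(1+k0)) * (\<rho> x + dist x y) powr (k0/(1+k0))"
    using assms unfolding admissible_def by blast
  define a where "a = 1/(1+k0)"
  have a: "0 < a" "a < 1" unfolding a_def using \<open>0 < k0\<close> by auto
  have "k0/(1+k0) = 1 - a" unfolding a_def using \<open>0 < k0\<close> by (simp add: field_simps)
  then have adm': "\<rho> y \<le> C3 * \<rho> x powr a * (\<rho> x + dist x y) powr (1 - a)" for x y
    using adm[where x=x and y=y] unfolding a_def by simp
  obtain x0 :: 'a where True by simp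
  have "\<rho> x0 powr a * \<rho> x0 powr (1 - a) = \<rho> x0"
    using pos[of x0] by (simp add: powr_add[symmetric])
  then have "\<rho> x0 \<le> C3 * \<rho> x0" using adm'[of x0 x0] by (simp add: mult.assoc)
  then have "1 \<le> C3" using pos[of x0] by simp
  then show thesis using that a pos adm' by blast
qed

text \<open>Since \<open>\<rho>(x)\<^sup>a (\<rho>(x)+d)\<^sup>1\<^sup>-\<^sup>a \<le> \<rho>(x)+d\<close>, admissible functions grow at most linearly.\<close>

lemma admissible_linear_growth:
  fixes px py d C3 a :: real
  assumes "0 < px" "0 \<le> d" "0 < a" "a < 1" "0 < C3"
    and "py \<le> C3 * px powr a * (px + d) powr (1 - a)"
  shows "py \<le> C3 * (px + d)"
proof -
  have "px powr a * (px + d) powr (1 - a) \<le> (px + d) powr a * (px + d) powr (1 - a)"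
    using assms by (intro mult_right_mono powr_mono2) auto
  also have "\<dots> = px + d" using assms by (simp add: powr_add[symmetric])
  finally show ?thesis using assms by (metis mult.assoc mult_left_mono order_trans less_imp_le)
qed

text \<open>It is used in place of \<open>\<rho>(y)\<close> in
  the dominating kernel because \<open>\<rho>\<close> itself need not be measurable.\<close>

definition rho_reg :: "('a::metric_space \<Rightarrow> real) \<Rightarrow> 'a \<Rightarrow> real" where
  "rho_reg \<rho> y = (INF z. \<rho> z + dist y z)"

lemma rho_reg:
  fixes \<rho> :: "'a::metric_space \<Rightarrow> real"
  assumes pos: "\<And>x. 0 < \<rho> x" and growth: "\<And>x y. \<rho> y \<le> C3 * (\<rho> x + dist x y)" and C3: "0 < C3"
  shows "0 < rho_reg \<rho> y" "rho_reg \<rho> y \<le> \<rho> y" "\<rho> y \<le> C3 * rho_reg \<rho> y"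
    and "dist (rho_reg \<rho> x) (rho_reg \<rho> y) \<le> dist x y"
proof -
  have bdd: "bdd_below (range (\<lambda>z. \<rho> z + dist y z))" for y
  proof (rule bdd_belowI[of _ 0])
    fix u assume "u \<in> range (\<lambda>z. \<rho> z + dist y z)"
    then obtain z where "u = \<rho> z + dist y z" by blast
    then show "0 \<le> u" using pos[of z] by simp
  qed
  have upper: "rho_reg \<rho> y \<le> \<rho> z + dist y z" for y z
    unfolding rho_reg_def by (rule cINF_lower[OF bdd]) simp
  have lower: "\<rho> y / C3 \<le> rho_reg \<rho> y" for y
    unfolding rho_reg_def
  proof (rule cINF_greatest)
    show "\<rho> y / C3 \<le> \<rho> z + dist y z" for z
      using growth[where x=z and y=y] C3 by (simp add: divide_le_eq dist_commute mult.commute)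
  qed simp
  show "0 < rho_reg \<rho> y" using lower[of y] pos[of y] C3 by (meson divide_pos_pos order_less_le_trans)
  show "rho_reg \<rho> y \<le> \<rho> y" using upper[of y y] by simp
  show "\<rho> y \<le> C3 * rho_reg \<rho> y" using lower[of y] C3 by (simp add: divide_le_eq mult.commute)
  have lip: "rho_reg \<rho> u \<le> rho_reg \<rho> v + dist u v" for u v
  proof -
    have "rho_reg \<rho> u - dist u v \<le> \<rho> z + dist v z" for z
      using upper[of u z] dist_triangle[of u z v] by linarith
    then have "rho_reg \<rho> u - dist u v \<le> rho_reg \<rho> v"
      unfolding rho_reg_def[of \<rho> v] by (intro cINF_greatest) auto
    then show ?thesis by simp
  qed
  show "dist (rho_reg \<rho> x) (rho_reg \<rho> y) \<le> dist x y"
    using lip[of x y] lip[of y x] by (simp add: dist_real_def dist_commute abs_le_iff)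
qed

section \<open>Domination of the error kernel\<close>

text \<open>The dominating kernel: a bump of width \<open>r\<close> in the variable \<open>d(x,y)\<close>, normalized by the
  volume \<open>V(y,x) = \<mu>(B(y,d(x,y)))\<close> seen from \<open>y\<close>, which makes it integrable in \<open>x\<close>.\<close>

definition scale_kernel :: "'a::metric_space measure \<Rightarrow> real \<Rightarrow> real \<Rightarrow> 'a \<Rightarrow> 'a \<Rightarrow> real" where
  "scale_kernel M r \<beta> x y =
     min (dist x y / r) (r / dist x y) powr \<beta> / measure M (ball y (dist x y))"

lemma scale_kernel_nonneg: "0 \<le> scale_kernel M r \<beta> x y"
  unfolding scale_kernel_def by simp

lemma RD_ball_volume_swap:
  fixes M :: "'a::metric_space measure"
  assumes rd: "RD_space M" and "x \<noteq> y"
    and doubling: "\<And>x r. 0 < r \<Longrightarrow> measure M (ball x (2*r)) \<le> D * measure M (ball x r)"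
  shows "measure M (ball y (dist x y)) \<le> D * Vxy M x y"
proof -
  have "ball y (dist x y) \<subseteq> ball x (2 * dist x y)"
    by (intro ball_subset_ball_dist) (simp add: dist_commute)
  then show ?thesis
    using RD_ball_measure_mono[OF rd] doubling[of "dist x y" x] assms(2) unfolding Vxy_def
    by (meson order_trans zero_less_dist_iff)
qed

text \<open>The bump at scale \<open>\<rho>(x)\<close> is first transferred to scale
  \<open>\<rho>(y)\<close> by admissibility, then to \<open>g(y)\<close>; the volume \<open>V(x,y)\<close> is replaced by \<open>V(y,x)\<close> by doubling.\<close>

lemma error_kernel_bound:
  fixes M :: "'a::metric_space measure" and \<rho> g :: "'a \<Rightarrow> real"
  assumes rd: "RD_space M" and \<kappa>: "0 < \<kappa>" and C2: "1 \<le> C2"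
    and lower: "\<And>x r lam. 0 < r \<Longrightarrow> 1 \<le> lam \<Longrightarrow> (1/C2) * lam powr \<kappa> * Vr M x r \<le> Vr M x (lam*r)"
    and doubling: "\<And>x r. 0 < r \<Longrightarrow> measure M (ball x (2*r)) \<le> D * measure M (ball x r)"
    and C3: "1 \<le> C3" and a: "0 < a" "a < 1" and pos: "\<And>x. 0 < \<rho> x"
    and adm: "\<And>x y. \<rho> y \<le> C3 * \<rho> x powr a * (\<rho> x + dist x y) powr (1 - a)"
    and g: "0 < g y" "g y \<le> \<rho> y" "\<rho> y \<le> C3 * g y"
    and \<delta>: "0 < \<delta>1" "0 < \<delta>2" and t: "0 < t" "t < \<rho> x" and xy: "x \<noteq> y"
  shows "(t/(t + \<rho> x)) powr \<delta>1 * dec M t x y \<delta>2 \<le>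
    C2 * (2*C3) powr (min \<delta>1 (min \<delta>2 \<kappa>)) * C3 powr (a * min \<delta>1 (min \<delta>2 \<kappa>)) * D *
      scale_kernel M (g y) (a * min \<delta>1 (min \<delta>2 \<kappa>)) x y"
proof -
  define \<theta> where "\<theta> = min \<delta>1 (min \<delta>2 \<kappa>)"
  define d where "d = dist x y"
  define V where "V = Vxy M x y"
  define m where "m = min (d/\<rho> x) (\<rho> x/d)"
  define my where "my = min (d/\<rho> y) (\<rho> y/d)"
  define n where "n = min (d/g y) (g y/d)"
  have \<theta>: "0 < \<theta>" unfolding \<theta>_def using \<delta> \<kappa> by simp
  have d: "0 < d" unfolding d_def using xy by simp
  have V: "0 < V" unfolding V_def Vxy_def using RD_ball_measure_pos[OF rd] xy by simp
  have Vy: "0 < measure M (ball y d)" using RD_ball_measure_pos[OF rd d] .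
  have W: "0 < Vr M x t" unfolding Vr_def using RD_ball_measure_pos[OF rd t(1)] .
  have "dec M t x y \<delta>2 = 1/(Vr M x t + V) * (t/(t+d)) powr \<delta>2" unfolding dec_def V_def d_def ..
  moreover have "(1/C2) * (t/d) powr \<kappa> * V \<le> Vr M x t" if "d < t"
    using lower[of d "t/d" x] d that unfolding V_def Vxy_def Vr_def d_def by simp
  ultimately have step1: "(t/(t + \<rho> x)) powr \<delta>1 * dec M t x y \<delta>2 \<le> C2 * m powr \<theta> * (1/V)"
    using error_factor_bound[OF t d V W C2 \<kappa> \<delta>] unfolding m_def \<theta>_def by simp
  have "m \<le> 2 * C3 * my powr a" unfolding m_def my_def
    using admissible_ratio_transfer[OF pos[of x] pos[of y] d C3 a]
      adm[where x=x and y=y] adm[where x=y and y=x] unfolding d_def by (simp add: dist_commute)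
  then have "m powr \<theta> \<le> (2 * C3 * my powr a) powr \<theta>"
    using \<theta> d pos[of x] unfolding m_def by (intro powr_mono2) auto
  also have "\<dots> \<le> (2 * C3 * (C3 * n) powr a) powr \<theta>"
    using \<theta> a C3 d g pos[of y] min_ratio_comparable[OF g d C3] unfolding my_def n_def
    by (intro powr_mono2 mult_left_mono) auto
  also have "\<dots> = (2*C3) powr \<theta> * C3 powr (a*\<theta>) * n powr (a*\<theta>)"
    by (simp add: powr_mult powr_powr mult_ac)
  finally have step2: "m powr \<theta> \<le> (2*C3) powr \<theta> * C3 powr (a*\<theta>) * n powr (a*\<theta>)" .
  have "measure M (ball y d) \<le> D * V"
    unfolding V_def d_def by (rule RD_ball_volume_swap[OF rd xy doubling])
  then have step3: "1 / V \<le> D / measure M (ball y d)" using V Vy by (simp add: field_simps)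
  have "C2 * m powr \<theta> * (1/V)
      \<le> C2 * ((2*C3) powr \<theta> * C3 powr (a*\<theta>) * n powr (a*\<theta>)) * (D / measure M (ball y d))"
    using step2 step3 C2 V by (intro mult_mono mult_left_mono) auto
  also have "\<dots> = C2 * (2*C3) powr \<theta> * C3 powr (a*\<theta>) * D * scale_kernel M (g y) (a*\<theta>) x y"
    unfolding scale_kernel_def n_def d_def by simp
  finally show ?thesis using step1 unfolding \<theta>_def by linarith
qed

section \<open>Integrability of the scale kernel\<close>

text \<open>We show \<open>\<integral> K\<^sub>r(x,y) d\<mu>(x) \<le> B\<close> uniformly in \<open>y\<close> and \<open>r\<close>, by splitting \<open>\<X>\<close> into the dyadic
  annuli \<open>2\<^sup>kr \<le> d(x,y) < 2\<^sup>k\<^sup>+\<^sup>1r\<close> and \<open>r/2\<^sup>k\<^sup>+\<^sup>1 \<le> d(x,y) < r/2\<^sup>k\<close>: on the \<open>k\<close>-th annulus the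
  bump is at most \<open>2\<^sup>-\<^sup>k\<^sup>\<beta>\<close>, and by doubling the annulus has measure comparable to the
  normalizing volume.\<close>

lemma dyadic_floor:
  fixes z :: real assumes "1 \<le> z" obtains k :: nat where "2^k \<le> z" "z < 2^Suc k"
proof -
  define k where "k = nat \<lfloor>log 2 z\<rfloor>"
  have "0 \<le> log 2 z" using assms by simp
  then have "\<lfloor>log 2 z\<rfloor> = int k" unfolding k_def by simp
  then have "2 powr real k \<le> z \<and> z < 2 powr (real k + 1)"
    using floor_log_eq_powr_iff[of z 2 "int k"] assms by simp
  then show thesis using that[of k] by (simp add: powr_realpow powr_add mult.commute)
qed

lemma dyadic_ceiling:
  fixes z :: real assumes "1 < z" obtains k :: nat where "2^k < z" "z \<le> 2^Suc k"
proof -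
  define k where "k = nat (\<lceil>log 2 z\<rceil> - 1)"
  have "0 < log 2 z" using assms by simp
  then have "\<lceil>log 2 z\<rceil> = int k + 1" unfolding k_def by simp
  then have "2 powr real k < z \<and> z \<le> 2 powr (real k + 1)"
    using ceiling_log_eq_powr_iff[of z 2 k] assms by (simp add: add.commute)
  then show thesis using that[of k] by (simp add: powr_realpow powr_add mult.commute)
qed

definition annulus :: "'a::metric_space \<Rightarrow> real \<Rightarrow> 'a set" where
  "annulus y r = ball y (2*r) - ball y r"

lemma annulus_sets: "RD_space (M::'a::metric_space measure) \<Longrightarrow> annulus y r \<in> sets M"
  unfolding annulus_def using RD_ball_sets by blast

lemma annulus_integral:
  fixes M :: "'a::metric_space measure"
  assumes rd: "RD_space M"
    and doubling: "\<And>x r. 0 < r \<Longrightarrow> measure M (ball x (2*r)) \<le> D * measure M (ball x r)"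
    and r: "0 < r" and u: "0 \<le> u"
  shows "(\<integral>\<^sup>+x. ennreal (u / measure M (ball y r)) * indicator (annulus y r) x \<partial>M) \<le> ennreal (u * D)"
proof -
  have pos: "0 < measure M (ball y r)" using RD_ball_measure_pos[OF rd r] .
  have "(\<integral>\<^sup>+x. ennreal (u / measure M (ball y r)) * indicator (annulus y r) x \<partial>M)
      = ennreal (u / measure M (ball y r)) * emeasure M (annulus y r)"
    by (rule nn_integral_cmult_indicator[OF annulus_sets[OF rd]])
  also have "\<dots> \<le> ennreal (u / measure M (ball y r)) * emeasure M (ball y (2*r))"
    unfolding annulus_def by (intro mult_left_mono emeasure_mono) (use RD_ball_sets[OF rd] in auto)
  also have "\<dots> = ennreal (u / measure M (ball y r)) * ennreal (measure M (ball y (2*r)))"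
    by (simp add: RD_emeasure_ball[OF rd])
  also have "\<dots> = ennreal (u / measure M (ball y r) * measure M (ball y (2*r)))"
    by (rule ennreal_mult[symmetric]) (use u pos in auto)
  also have "u / measure M (ball y r) * measure M (ball y (2*r))
      \<le> u / measure M (ball y r) * (D * measure M (ball y r))"
    using doubling[OF r, of y] u pos by (intro mult_left_mono) auto
  also have "\<dots> = u * D" using pos by simp
  finally show ?thesis by (simp add: ennreal_leI)
qed

lemma scale_kernel_on_annulus:
  fixes M :: "'a::metric_space measure"
  assumes rd: "RD_space M" and \<beta>: "0 < \<beta>" and r1: "0 < r1" and x: "x \<in> annulus y r1"
    and bump: "min (dist x y / r) (r / dist x y) \<le> 1/2^k" and r: "0 < r"
  shows "scale_kernel M r \<beta> x y \<le> ((1/2) powr \<beta>)^k / measure M (ball y r1)"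
proof -
  define n where "n = min (dist x y / r) (r / dist x y)"
  have d: "r1 \<le> dist x y" using x unfolding annulus_def by (simp add: dist_commute)
  have n: "0 \<le> n" unfolding n_def using r d r1 by simp
  have "n powr \<beta> \<le> (1/2^k) powr \<beta>" using bump n \<beta> unfolding n_def by (intro powr_mono2) auto
  also have "\<dots> = ((1/2) powr \<beta>)^k" by (simp add: powr_power powr_divide powr_realpow[symmetric] powr_powr mult.commute)
  finally have "n powr \<beta> \<le> ((1/2) powr \<beta>)^k" .
  moreover have "measure M (ball y r1) \<le> measure M (ball y (dist x y))"
    using d by (intro RD_ball_measure_mono[OF rd] subset_ball)
  moreover have "0 < measure M (ball y r1)" using RD_ball_measure_pos[OF rd r1] .
  ultimately show ?thesis unfolding scale_kernel_def n_def[symmetric]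
    by (meson frac_le powr_ge_zero zero_le_power powr_ge_zero)
qed

lemma ennreal_term_le_suminf: "(f k :: ennreal) \<le> (\<Sum>i. f i)"
  using sum_le_suminf[OF summableI, of "{k}" f] by simp

lemma scale_kernel_dyadic_cover:
  fixes M :: "'a::metric_space measure"
  assumes rd: "RD_space M" and \<beta>: "0 < \<beta>" and r: "0 < r"
  defines "q \<equiv> (1/2) powr \<beta>"
  shows "ennreal (scale_kernel M r \<beta> x y) \<le>
    (\<Sum>k. ennreal (q^k / measure M (ball y (2^k*r))) * indicator (annulus y (2^k*r)) x) +
    (\<Sum>k. ennreal (q^k / measure M (ball y (r/2^Suc k))) * indicator (annulus y (r/2^Suc k)) x)"
    (is "_ \<le> ?outer + ?inner")
proof -
  define d where "d = dist x y"
  consider "d = 0" | "0 < d" "r \<le> d" | "0 < d" "d < r" unfolding d_def by fastforce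
  then show ?thesis
  proof cases
    case 1
    then show ?thesis unfolding scale_kernel_def d_def by simp
  next
    case 2
    obtain k where k: "2^k \<le> d/r" "d/r < 2^Suc k" using dyadic_floor[of "d/r"] 2 r by auto
    then have "2^k*r \<le> d" "d < 2*(2^k*r)" using r by (auto simp: field_simps)
    then have x: "x \<in> annulus y (2^k*r)" unfolding annulus_def d_def by (simp add: dist_commute)
    have "r/d \<le> 1/2^k" using \<open>2^k*r \<le> d\<close> r 2 by (simp add: field_simps)
    then have "min (d/r) (r/d) \<le> 1/2^k" by (rule min.coboundedI2)
    then have "scale_kernel M r \<beta> x y \<le> q^k / measure M (ball y (2^k*r))"
      unfolding q_def d_def using r by (intro scale_kernel_on_annulus[OF rd \<beta> _ x]) auto
    then have "ennreal (scale_kernel M r \<beta> x y)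
        \<le> ennreal (q^k / measure M (ball y (2^k*r))) * indicator (annulus y (2^k*r)) x"
      using x by (simp add: ennreal_leI)
    also have "\<dots> \<le> ?outer" by (rule ennreal_term_le_suminf)
    finally show ?thesis by (simp add: add_increasing2)
  next
    case 3
    obtain k where k: "2^k < r/d" "r/d \<le> 2^Suc k" using dyadic_ceiling[of "r/d"] 3 by auto
    then have "r/2^Suc k \<le> d" "d < 2*(r/2^Suc k)" using r 3 by (auto simp: field_simps)
    then have x: "x \<in> annulus y (r/2^Suc k)" unfolding annulus_def d_def by (simp add: dist_commute)
    have "d/r \<le> 1/2^k" using k r 3 by (simp add: field_simps)
    then have "min (d/r) (r/d) \<le> 1/2^k" by (rule min.coboundedI1)
    then have "scale_kernel M r \<beta> x y \<le> q^k / measure M (ball y (r/2^Suc k))"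
      unfolding q_def d_def using r by (intro scale_kernel_on_annulus[OF rd \<beta> _ x]) auto
    then have "ennreal (scale_kernel M r \<beta> x y)
        \<le> ennreal (q^k / measure M (ball y (r/2^Suc k))) * indicator (annulus y (r/2^Suc k)) x"
      using x by (simp add: ennreal_leI)
    also have "\<dots> \<le> ?inner" by (rule ennreal_term_le_suminf)
    finally show ?thesis by (simp add: add_increasing)
  qed
qed

lemma scale_kernel_column_bound:
  fixes M :: "'a::metric_space measure"
  assumes rd: "RD_space M" and \<beta>: "0 < \<beta>" and r: "0 < r"
    and doubling: "\<And>x r. 0 < r \<Longrightarrow> measure M (ball x (2*r)) \<le> D * measure M (ball x r)" and D: "0 < D"
  shows "(\<integral>\<^sup>+x. ennreal (scale_kernel M r \<beta> x y) \<partial>M) \<le> ennreal (2 * (D / (1 - (1/2) powr \<beta>)))"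
proof -
  define q where "q = (1/2::real) powr \<beta>"
  have q: "0 < q" "q < 1" unfolding q_def using powr_less_mono'[of "1/2::real" 0 \<beta>] \<beta> by auto
  define F where "F k x = ennreal (q^k / measure M (ball y (2^k*r))) * indicator (annulus y (2^k*r)) x"
    for k x
  define G where "G k x = ennreal (q^k / measure M (ball y (r/2^Suc k))) * indicator (annulus y (r/2^Suc k)) x"
    for k x
  have F_meas: "F k \<in> borel_measurable M" and G_meas: "G k \<in> borel_measurable M" for k
    unfolding F_def G_def using annulus_sets[OF rd] by measurable
  have "(\<integral>\<^sup>+x. F k x \<partial>M) \<le> ennreal (q^k * D)" "(\<integral>\<^sup>+x. G k x \<partial>M) \<le> ennreal (q^k * D)" for k
    unfolding F_def G_def using r q by (auto intro!: annulus_integral[OF rd doubling])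
  then have "(\<Sum>k. \<integral>\<^sup>+x. F k x \<partial>M) + (\<Sum>k. \<integral>\<^sup>+x. G k x \<partial>M)
      \<le> (\<Sum>k. ennreal (q^k * D)) + (\<Sum>k. ennreal (q^k * D))"
    by (intro add_mono suminf_le) auto
  also have "(\<Sum>k. ennreal (q^k * D)) = ennreal (D / (1 - q))"
  proof -
    have "summable (\<lambda>k. q^k * D)" using q by (intro summable_mult2 summable_geometric) auto
    then have "(\<Sum>k. ennreal (q^k * D)) = ennreal (\<Sum>k. q^k * D)"
      using q D by (intro suminf_ennreal2) auto
    also have "(\<Sum>k. q^k * D) = D / (1 - q)"
      using suminf_mult2[OF summable_geometric, of q D] suminf_geometric[of q] q by simp
    finally show ?thesis .
  qed
  also have "ennreal (D / (1 - q)) + ennreal (D / (1 - q)) = ennreal (2 * (D / (1 - q)))"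
    using q D by (simp add: ennreal_plus[symmetric] del: ennreal_plus)
  finally have sums: "(\<Sum>k. \<integral>\<^sup>+x. F k x \<partial>M) + (\<Sum>k. \<integral>\<^sup>+x. G k x \<partial>M) \<le> ennreal (2 * (D / (1 - q)))" .
  have "(\<integral>\<^sup>+x. ennreal (scale_kernel M r \<beta> x y) \<partial>M) \<le> (\<integral>\<^sup>+x. (\<Sum>k. F k x) + (\<Sum>k. G k x) \<partial>M)"
    unfolding F_def G_def q_def by (intro nn_integral_mono scale_kernel_dyadic_cover[OF rd \<beta> r])
  also have "\<dots> = (\<Sum>k. \<integral>\<^sup>+x. F k x \<partial>M) + (\<Sum>k. \<integral>\<^sup>+x. G k x \<partial>M)"
    using F_meas G_meas by (simp add: nn_integral_add nn_integral_suminf)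
  finally show ?thesis using sums unfolding q_def by simp
qed

section \<open>The maximal error operator on \<open>L\<^sup>1\<close>\<close>

lemma dominated_integral_bound:
  fixes k h f :: "'a \<Rightarrow> real"
  assumes "AE y in M. \<bar>k y\<bar> \<le> h y"
  shows "ennreal \<bar>\<integral>y. k y * f y \<partial>M\<bar> \<le> (\<integral>\<^sup>+y. ennreal (h y * \<bar>f y\<bar>) \<partial>M)"
proof -
  have "ennreal \<bar>\<integral>y. k y * f y \<partial>M\<bar> \<le> (\<integral>\<^sup>+y. ennreal (norm (k y * f y)) \<partial>M)"
  proof (cases "integrable M (\<lambda>y. k y * f y)")
    case True
    then show ?thesis using integral_norm_bound_ennreal by fastforce
  qed (simp add: not_integrable_integral_eq)
  also have "\<dots> \<le> (\<integral>\<^sup>+y. ennreal (h y * \<bar>f y\<bar>) \<partial>M)"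
    using assms by (intro nn_integral_mono_AE) (auto elim!: eventually_mono simp: abs_mult mult_right_mono)
  finally show ?thesis .
qed

text \<open>Schur-type bound behind the theorem: if every operator of a family is dominated a.e. by
  one fixed kernel \<open>K \<ge> 0\<close> whose columns have integral at most \<open>B\<close>, then the maximal operator
  of the family maps \<open>L\<^sup>1\<close> to \<open>L\<^sup>1\<close> with norm at most \<open>B\<close> (Tonelli's theorem).\<close>

lemma maximal_kernel_L1_bound:
  fixes M :: "'a measure" and K :: "'a \<Rightarrow> 'a \<Rightarrow> real" and E :: "'t \<Rightarrow> 'a \<Rightarrow> 'a \<Rightarrow> real"
  assumes M: "sigma_finite_measure M"
    and K_meas: "(\<lambda>p. K (fst p) (snd p)) \<in> borel_measurable (M \<Otimes>\<^sub>M M)" and K_nonneg: "\<And>x y. 0 \<le> K x y"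
    and column: "\<And>y. (\<integral>\<^sup>+x. ennreal (K x y) \<partial>M) \<le> ennreal B"
    and dominated: "\<And>x t. t \<in> I x \<Longrightarrow> AE y in M. \<bar>E t x y\<bar> \<le> c * K x y" and c: "0 \<le> c"
    and f: "f \<in> borel_measurable M"
  shows "(\<integral>\<^sup>+x. (SUP t\<in>I x. ennreal \<bar>\<integral>y. E t x y * f y \<partial>M\<bar>) \<partial>M)
    \<le> ennreal (c * B) * (\<integral>\<^sup>+x. ennreal \<bar>f x\<bar> \<partial>M)"
proof -
  interpret pair_sigma_finite M M using M by (simp add: pair_sigma_finite_def)
  define H where "H x y = ennreal c * ennreal (K x y) * ennreal \<bar>f y\<bar>" for x y
  have H_meas: "(\<lambda>(x, y). H x y) \<in> borel_measurable (M \<Otimes>\<^sub>M M)"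
    using K_meas measurable_compose[OF measurable_snd f] unfolding H_def case_prod_beta by measurable
  have rows: "(SUP t\<in>I x. ennreal \<bar>\<integral>y. E t x y * f y \<partial>M\<bar>) \<le> (\<integral>\<^sup>+y. H x y \<partial>M)" for x
  proof (rule SUP_least)
    fix t assume "t \<in> I x"
    then have "ennreal \<bar>\<integral>y. E t x y * f y \<partial>M\<bar> \<le> (\<integral>\<^sup>+y. ennreal (c * K x y * \<bar>f y\<bar>) \<partial>M)"
      by (intro dominated_integral_bound dominated)
    also have "\<dots> = (\<integral>\<^sup>+y. H x y \<partial>M)"
      unfolding H_def using c K_nonneg by (simp add: ennreal_mult)
    finally show "ennreal \<bar>\<integral>y. E t x y * f y \<partial>M\<bar> \<le> (\<integral>\<^sup>+y. H x y \<partial>M)" .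
  qed
  have columns: "(\<integral>\<^sup>+x. H x y \<partial>M) \<le> ennreal (c * B) * ennreal \<bar>f y\<bar>" if y: "y \<in> space M" for y
  proof -
    have "(\<lambda>x. K x y) \<in> borel_measurable M"
      using measurable_compose[OF measurable_Pair2'[OF y] K_meas] by simp
    then have "(\<lambda>x. ennreal (K x y)) \<in> borel_measurable M" by measurable
    then have "(\<integral>\<^sup>+x. H x y \<partial>M) = ennreal c * (\<integral>\<^sup>+x. ennreal (K x y) \<partial>M) * ennreal \<bar>f y\<bar>"
      unfolding H_def by (simp add: nn_integral_multc nn_integral_cmult)
    also have "\<dots> \<le> ennreal c * ennreal B * ennreal \<bar>f y\<bar>"
      by (intro mult_right_mono mult_left_mono column) simp_all
    also have "\<dots> = ennreal (c * B) * ennreal \<bar>f y\<bar>" using c by (simp add: ennreal_mult')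
    finally show ?thesis .
  qed
  have "(\<integral>\<^sup>+x. (SUP t\<in>I x. ennreal \<bar>\<integral>y. E t x y * f y \<partial>M\<bar>) \<partial>M) \<le> (\<integral>\<^sup>+x. \<integral>\<^sup>+y. H x y \<partial>M \<partial>M)"
    by (intro nn_integral_mono rows)
  also have "\<dots> = (\<integral>\<^sup>+y. \<integral>\<^sup>+x. H x y \<partial>M \<partial>M)"
    using Fubini'[OF H_meas] by simp
  also have "\<dots> \<le> (\<integral>\<^sup>+y. ennreal (c * B) * ennreal \<bar>f y\<bar> \<partial>M)" by (intro nn_integral_mono columns)
  also have "\<dots> = ennreal (c * B) * (\<integral>\<^sup>+y. ennreal \<bar>f y\<bar> \<partial>M)" using f by (intro nn_integral_cmult) measurable
  finally show ?thesis .
qed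

lemma admissible_rho_reg:
  fixes \<rho> :: "'a::metric_space \<Rightarrow> real"
  assumes "admissible \<rho>"
  shows "0 < rho_reg \<rho> y" and "continuous_on UNIV (rho_reg \<rho>)"
proof -
  obtain C3 a where C3: "1 \<le> C3" and a: "0 < a" "a < 1" and pos: "\<And>x. 0 < \<rho> x"
    and adm: "\<And>x y. \<rho> y \<le> C3 * \<rho> x powr a * (\<rho> x + dist x y) powr (1 - a)"
    using admissible_constants[OF assms] by blast
  have growth: "\<rho> y \<le> C3 * (\<rho> x + dist x y)" for x y
    using admissible_linear_growth[OF pos[of x] _ a _ adm[where x=x and y=y]] C3 by simp
  note reg = rho_reg[OF pos growth order_less_le_trans[OF zero_less_one C3]]
  show "0 < rho_reg \<rho> y" by (rule reg(1))
  show "continuous_on UNIV (rho_reg \<rho>)"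
    by (rule lipschitz_on_continuous_on[of 1], rule lipschitz_onI) (use reg(4) in auto)
qed

lemma RD_rho_reg_measurable:
  fixes M :: "'a::metric_space measure"
  assumes rd: "RD_space M" and "admissible \<rho>"
  shows "rho_reg \<rho> \<in> borel_measurable M"
proof -
  have "rho_reg \<rho> \<in> borel_measurable borel"
    using admissible_rho_reg(2)[OF assms(2)] by (rule borel_measurable_continuous_onI)
  then show ?thesis by (subst measurable_cong_sets[OF RD_sets[OF rd] refl])
qed

lemma RD_scale_kernel_measurable:
  fixes M :: "'a::metric_space measure"
  assumes rd: "RD_space M" and g: "g \<in> borel_measurable M"
  shows "(\<lambda>p. scale_kernel M (g (snd p)) \<beta> (fst p) (snd p)) \<in> borel_measurable (M \<Otimes>\<^sub>M M)"
proof -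
  have "(\<lambda>p. dist (fst p) (snd p)) \<in> borel_measurable (M \<Otimes>\<^sub>M M)"
    by (rule RD_dist_pair_measurable[OF rd])
  moreover have "(\<lambda>p. measure M (ball (snd p) (dist (fst p) (snd p)))) \<in> borel_measurable (M \<Otimes>\<^sub>M M)"
    by (rule RD_lsc_pair_measurable[OF rd RD_ball_measure_lsc[OF rd]])
  moreover have "(\<lambda>p. g (snd p)) \<in> borel_measurable (M \<Otimes>\<^sub>M M)"
    by (rule measurable_compose[OF measurable_snd g])
  ultimately show ?thesis unfolding scale_kernel_def by measurable
qed

lemma error_factor_domination:
  fixes M :: "'a::metric_space measure" and \<rho> :: "'a \<Rightarrow> real"
  assumes rd: "RD_space M" and adm: "admissible \<rho>" and \<delta>: "0 < \<delta>1" "0 < \<delta>2"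
  obtains K \<beta> :: real where "0 < K" "0 < \<beta>"
    "\<And>t x y. 0 < t \<Longrightarrow> t < \<rho> x \<Longrightarrow> x \<noteq> y \<Longrightarrow>
       (t/(t + \<rho> x)) powr \<delta>1 * dec M t x y \<delta>2 \<le> K * scale_kernel M (rho_reg \<rho> y) \<beta> x y"
proof -
  obtain \<kappa> C2 N where \<kappa>: "0 < \<kappa>" and C2: "1 \<le> C2"
    and lower: "\<And>x r lam. 0 < r \<Longrightarrow> 1 \<le> lam \<Longrightarrow> (1/C2) * lam powr \<kappa> * Vr M x r \<le> Vr M x (lam*r)"
    and "\<And>x r lam. 0 < r \<Longrightarrow> 1 \<le> lam \<Longrightarrow> Vr M x (lam*r) \<le> C2 * lam powr N * Vr M x r"
    using RD_dimension_bounds[OF rd] by blast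
  obtain D where D: "0 < D"
    and doubling: "\<And>x r. 0 < r \<Longrightarrow> measure M (ball x (2*r)) \<le> D * measure M (ball x r)"
    using RD_doubling[OF rd] by blast
  obtain C3 a where C3: "1 \<le> C3" and a: "0 < a" "a < 1" and pos: "\<And>x. 0 < \<rho> x"
    and adm': "\<And>x y. \<rho> y \<le> C3 * \<rho> x powr a * (\<rho> x + dist x y) powr (1 - a)"
    using admissible_constants[OF adm] by blast
  have growth: "\<rho> y \<le> C3 * (\<rho> x + dist x y)" for x y
    using admissible_linear_growth[OF pos[of x] _ a _ adm'[where x=x and y=y]] C3 by simp
  note reg = rho_reg[OF pos growth order_less_le_trans[OF zero_less_one C3]]
  define \<theta> where "\<theta> = min \<delta>1 (min \<delta>2 \<kappa>)"
  have \<theta>: "0 < \<theta>" unfolding \<theta>_def using \<delta> \<kappa> by simp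
  show thesis
  proof (rule that[of "C2 * (2*C3) powr \<theta> * C3 powr (a*\<theta>) * D" "a*\<theta>"])
    show "0 < C2 * (2*C3) powr \<theta> * C3 powr (a*\<theta>) * D" using C2 C3 D by simp
    show "0 < a*\<theta>" using a \<theta> by simp
    show "(t/(t + \<rho> x)) powr \<delta>1 * dec M t x y \<delta>2
        \<le> C2 * (2*C3) powr \<theta> * C3 powr (a*\<theta>) * D * scale_kernel M (rho_reg \<rho> y) (a*\<theta>) x y"
      if "0 < t" "t < \<rho> x" "x \<noteq> y" for t x y
      unfolding \<theta>_def
      using error_kernel_bound[where g="rho_reg \<rho>" and y=y, OF rd \<kappa> C2 lower doubling C3 a pos adm'
          reg(1-3) \<delta> that] by simp
  qed
qed

text \<open>Hence the error kernel itself is dominated for \<open>\<mu>\<close>-a.e. \<open>y\<close> (the diagonal is null).\<close>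

lemma error_kernel_domination:
  fixes M :: "'a::metric_space measure" and \<rho> :: "'a \<Rightarrow> real" and E :: "real \<Rightarrow> 'a \<Rightarrow> 'a \<Rightarrow> real"
  assumes rd: "RD_space M" and adm: "admissible \<rho>" and \<delta>: "0 < \<delta>1" "0 < \<delta>2" and C: "0 < C"
    and error: "\<And>t x y. 0 < t \<Longrightarrow> \<bar>E t x y\<bar> \<le> C * (t / (t + \<rho> x)) powr \<delta>1 * dec M t x y \<delta>2"
  obtains K \<beta> :: real where "0 < K" "0 < \<beta>"
    "\<And>x t. t \<in> {0<..<\<rho> x} \<Longrightarrow> AE y in M. \<bar>E t x y\<bar> \<le> K * scale_kernel M (rho_reg \<rho> y) \<beta> x y"
proof -
  obtain K \<beta> where K: "0 < K" "0 < \<beta>" and dom: "\<And>t x y. 0 < t \<Longrightarrow> t < \<rho> x \<Longrightarrow> x \<noteq> y \<Longrightarrow>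
      (t/(t + \<rho> x)) powr \<delta>1 * dec M t x y \<delta>2 \<le> K * scale_kernel M (rho_reg \<rho> y) \<beta> x y"
    using error_factor_domination[OF rd adm \<delta>] by blast
  have "AE y in M. \<bar>E t x y\<bar> \<le> (C * K) * scale_kernel M (rho_reg \<rho> y) \<beta> x y"
    if t: "t \<in> {0<..<\<rho> x}" for t x
    using AE_not_in[OF RD_points_null[OF rd, of x]]
  proof (rule eventually_mono)
    fix y assume "y \<notin> {x}"
    then have "C * ((t/(t + \<rho> x)) powr \<delta>1 * dec M t x y \<delta>2) \<le> C * (K * scale_kernel M (rho_reg \<rho> y) \<beta> x y)"
      using dom[of t x y] t C by (intro mult_left_mono) auto
    then show "\<bar>E t x y\<bar> \<le> (C * K) * scale_kernel M (rho_reg \<rho> y) \<beta> x y"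
      using error[of t x y] t by (simp add: mult.assoc)
  qed
  then show thesis using that[of "C * K" \<beta>] C K by simp
qed

lemma RD_scale_kernel_integrable:
  fixes M :: "'a::metric_space measure"
  assumes rd: "RD_space M" and \<beta>: "0 < \<beta>"
  obtains B where "0 < B" "\<And>r y. 0 < r \<Longrightarrow> (\<integral>\<^sup>+x. ennreal (scale_kernel M r \<beta> x y) \<partial>M) \<le> ennreal B"
proof -
  obtain D where D: "0 < D"
    and doubling: "\<And>x r. 0 < r \<Longrightarrow> measure M (ball x (2*r)) \<le> D * measure M (ball x r)"
    using RD_doubling[OF rd] by blast
  have "(1/2::real) powr \<beta> < 1" using powr_less_mono'[of "1/2::real" 0 \<beta>] \<beta> by simp
  then show thesis
    using that[of "2 * (D / (1 - (1/2) powr \<beta>))"] D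
      scale_kernel_column_bound[OF rd \<beta> _ doubling D] by simp
qed

theorem lemma4p4:
  fixes M :: "'a::metric_space measure" and \<rho> :: "'a \<Rightarrow> real"
    and T Tt :: "real \<Rightarrow> 'a \<Rightarrow> 'a \<Rightarrow> real"
    and e1 e2 e3 C \<delta>1 \<delta>2 \<delta>3 :: real
  assumes "RD_space M" and "admissible \<rho>"
    and "cont_AOTI M e1 e2 e3 Tt"
    and "\<forall>t>0. L2_kernel_operator M (T t)"
    and "0 < C" and "0 < \<delta>2" and "\<delta>2 \<le> e2" and "0 < \<delta>1" and "0 < \<delta>3"
    and "\<forall>t>0. \<forall>x y. \<bar>T t x y\<bar> \<le> C * dec M t x y \<delta>2 * (\<rho> x / (t + \<rho> x)) powr \<delta>3"
    and "\<forall>t>0. \<forall>x y. \<bar>T t x y - Tt t x y\<bar> \<le> C * (t / (t + \<rho> x)) powr \<delta>1 * dec M t x y \<delta>2"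
  shows "\<exists>C'>0. \<forall>f::'a \<Rightarrow> real. integrable M f \<longrightarrow>
    (\<integral>\<^sup>+x. (SUP t\<in>{0<..<\<rho> x}. ennreal \<bar>\<integral>y. (T t x y - Tt t x y) * f y \<partial>M\<bar>) \<partial>M)
      \<le> ennreal C' * (\<integral>\<^sup>+x. ennreal \<bar>f x\<bar> \<partial>M)"
proof -
  note rd = assms(1) and adm = assms(2)
  obtain K \<beta> where K: "0 < K" "0 < \<beta>" and dominated: "\<And>x t. t \<in> {0<..<\<rho> x} \<Longrightarrow>
      AE y in M. \<bar>T t x y - Tt t x y\<bar> \<le> K * scale_kernel M (rho_reg \<rho> y) \<beta> x y"
    using error_kernel_domination[OF rd adm assms(8,6,5), of "\<lambda>t x y. T t x y - Tt t x y"] assms(11) by blast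
  obtain B where B: "0 < B"
    and column: "\<And>r y. 0 < r \<Longrightarrow> (\<integral>\<^sup>+x. ennreal (scale_kernel M r \<beta> x y) \<partial>M) \<le> ennreal B"
    using RD_scale_kernel_integrable[OF rd K(2)] by blast
  define Ker where "Ker x y = scale_kernel M (rho_reg \<rho> y) \<beta> x y" for x y
  have meas: "(\<lambda>p. Ker (fst p) (snd p)) \<in> borel_measurable (M \<Otimes>\<^sub>M M)"
    unfolding Ker_def by (rule RD_scale_kernel_measurable[OF rd RD_rho_reg_measurable[OF rd adm]])
  have column: "(\<integral>\<^sup>+x. ennreal (Ker x y) \<partial>M) \<le> ennreal B" for y
    unfolding Ker_def by (rule column[OF admissible_rho_reg(1)[OF adm]])
  show ?thesis
  proof (intro exI[of _ "K * B"] conjI allI impI)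
    show "0 < K * B" using K B by simp
    fix f :: "'a \<Rightarrow> real" assume "integrable M f"
    then show "(\<integral>\<^sup>+x. (SUP t\<in>{0<..<\<rho> x}. ennreal \<bar>\<integral>y. (T t x y - Tt t x y) * f y \<partial>M\<bar>) \<partial>M)
      \<le> ennreal (K * B) * (\<integral>\<^sup>+x. ennreal \<bar>f x\<bar> \<partial>M)"
      using dominated unfolding Ker_def[symmetric]
      by (intro maximal_kernel_L1_bound[where E="\<lambda>t x y. T t x y - Tt t x y", OF RD_sigma_finite[OF rd] meas _ column])
        (use K in \<open>auto simp: Ker_def scale_kernel_nonneg\<close>)
  qed
qed
end
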